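(* Let $\Omega\subset\mathbb{R}^N$ ($N\ge2$) be open, bounded, with Lipschitz boundary, let $\mathscr{V}$ be an admissible Hilbert space, and let $\rho_\varepsilon$ be the standard mollifier. Let $\{\boldsymbol{v}_n\}_n$ be uniformly bounded in $\mathscr{L}^2([0,1];\mathscr{V})$ and $\{f_0^n\}_n$ be uniformly bounded in $BV(\Omega)$, and let $\phi^{\boldsymbol{v}_n}_t$, $t\in[0,1]$, be the diffeomorphism flow generated by $\boldsymbol{v}_n$. Then, for each $t\in[0,1]$, the sequence $\{(f_0^n*\rho_\varepsilon)\circ(\phi^{\boldsymbol{v}_n}_t)^{-1}\}_n$ is uniformly bounded in $BV(\Omega)$.
   Context: A Hilbert space $\mathscr{V}\subset\mathscr{C}^1_0(\Omega;\mathbb{R}^N)$ is admissible if there is $C>0$ with $\|\boldsymbol{w}\|_{\mathscr{V}}\ge C\|\boldsymbol{w}\|_{1,\infty}$ for all $\boldsymbol{w}\in\mathscr{V}$. $\mathscr{L}^2([0,1];\mathscr{V})$ is the space of fields with $\boldsymbol{v}(t,\cdot)\in\mathscr{V}$ and norm $(\int_0^1\|\boldsymbol{v}(t,\cdot)\|_{\mathscr{V}}^2dt)^{1/2}$. The flow $\phi^{\boldsymbol{v}}_t:\Omega\to\Omega$ solves $\partial_t\phi_t(x)=\boldsymbol{v}(t,\phi_t(x))$, $\phi_0(x)=x$; each $\phi^{\boldsymbol{v}}_t$ is a $\mathscr{C}^1$-diffeomorphism. Standard mollifier: $\rho(x)=C\exp(1/(|x|^2-1))$ for $|x|<1$, $0$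 otherwise, $\int\rho=1$, $\rho_\varepsilon(x)=\varepsilon^{-N}\rho(x/\varepsilon)$ for a fixed $\varepsilon>0$; $(f*\rho_\varepsilon)(x)=\int_\Omega f(y)\rho_\varepsilon(x-y)\,dy$. The $BV(\Omega)$ norm is $\|f\|_{\mathscr{L}^1(\Omega)}+|Df|(\Omega)$. *)

theory Defs
  imports "HOL-Analysis.Analysis"
begin

text \<open>Strong Lipschitz boundary: near each boundary point p, in suitable
  coordinates (unit direction e, hyperplane orthogonal to e), Omega is the
  region below the graph of a Lipschitz function over the hyperplane.\<close>
definition lipschitz_boundary :: "'a::euclidean_space set \<Rightarrow> bool" where
  "lipschitz_boundary \<Omega> \<longleftrightarrow>
     (\<forall>p\<in>frontier \<Omega>. \<exists>e r h L (\<gamma>::'a \<Rightarrow> real).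
        norm e = 1 \<and> r > 0 \<and> h > 0 \<and>
        L-lipschitz_on {y. y \<bullet> e = 0} \<gamma> \<and> \<gamma> 0 = 0 \<and>
        (\<forall>y. y \<bullet> e = 0 \<and> norm y < r \<longrightarrow> \<bar>\<gamma> y\<bar> < h) \<and>
        (\<forall>y s. y \<bullet> e = 0 \<and> norm y < r \<and> \<bar>s\<bar> < h \<longrightarrow>
             (p + y + s *\<^sub>R e \<in> \<Omega> \<longleftrightarrow> s < \<gamma> y)))"

definition C1_everywhere :: "('a::euclidean_space \<Rightarrow> 'b::euclidean_space) \<Rightarrow> bool" where
  "C1_everywhere w \<longleftrightarrow>
     (\<exists>D :: 'a \<Rightarrow> ('a \<Rightarrow>\<^sub>L 'b). (\<forall>x. (w has_derivative blinfun_apply (D x)) (at x))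
         \<and> continuous_on UNIV D)"

text \<open>C^1_0(Omega;R^N): C^1 fields on Omega vanishing (with their derivative)
  at the boundary, represented by their extension by zero, which is C^1 on
  the whole space and vanishes outside Omega.\<close>
definition C1_0 :: "'a::euclidean_space set \<Rightarrow> ('a \<Rightarrow> 'a) set" where
  "C1_0 \<Omega> = {w. C1_everywhere w \<and> (\<forall>x. x \<notin> \<Omega> \<longrightarrow> w x = 0)}"

definition norm_1_inf :: "'a::euclidean_space set \<Rightarrow> ('a \<Rightarrow> 'a) \<Rightarrow> real" where
  "norm_1_inf \<Omega> w = (SUP x\<in>\<Omega>. norm (w x)) + (SUP x\<in>\<Omega>. onorm (frechet_derivative w (at x)))"

definition admissible :: "'a::euclidean_space set \<Rightarrow> ('v::{real_inner,complete_space} \<Rightarrow> ('a \<Rightarrow> 'a)) \<Rightarrow> bool" where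
  "admissible \<Omega> \<iota> \<longleftrightarrow>
     (\<forall>a b. \<iota> (a + b) = (\<lambda>x. \<iota> a x + \<iota> b x)) \<and>
     (\<forall>c a. \<iota> (c *\<^sub>R a) = (\<lambda>x. c *\<^sub>R \<iota> a x)) \<and> inj \<iota> \<and> range \<iota> \<subseteq> C1_0 \<Omega> \<and>
     (\<exists>C>0. \<forall>w. norm w \<ge> C * norm_1_inf \<Omega> (\<iota> w))"

definition in_L2V :: "(real \<Rightarrow> 'v::{real_inner,complete_space}) \<Rightarrow> bool" where
  "in_L2V v \<longleftrightarrow> v \<in> borel_measurable (restrict_space lborel {0..1}) \<and>
      set_integrable lborel {0..1::real} (\<lambda>t. (norm (v t))\<^sup>2)"

definition L2V_norm :: "(real \<Rightarrow> 'v::{real_inner,complete_space}) \<Rightarrow> real" where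
  "L2V_norm v = sqrt (LINT t:{0..1}|lborel. (norm (v t))\<^sup>2)"

text \<open>phi is the flow of the field iota(v(t)) on Omega:
  phi_t(x) = x + int_0^t v(s, phi_s(x)) ds (Caratheodory sense, since v is only
  L^2 in time), and each phi_t is a bijection of Omega (a C^1 diffeomorphism).\<close>
definition is_flow :: "'a::euclidean_space set \<Rightarrow> ('v \<Rightarrow> ('a \<Rightarrow> 'a)) \<Rightarrow> (real \<Rightarrow> 'v)
     \<Rightarrow> (real \<Rightarrow> 'a \<Rightarrow> 'a) \<Rightarrow> bool" where
  "is_flow \<Omega> \<iota> v \<phi> \<longleftrightarrow>
     (\<forall>x\<in>\<Omega>. \<phi> 0 x = x) \<and>
     (\<forall>t\<in>{0..1}. \<forall>x\<in>\<Omega>. ((\<lambda>s. \<iota> (v s) (\<phi> s x)) has_integral (\<phi> t x - x)) {0..t}) \<and>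
     (\<forall>t\<in>{0..1}. bij_betw (\<phi> t) \<Omega> \<Omega>)"

definition rho0 :: "'a::euclidean_space \<Rightarrow> real" where
  "rho0 x = (if norm x < 1 then exp (1 / ((norm x)\<^sup>2 - 1)) else 0)"

definition mollifier :: "'a::euclidean_space \<Rightarrow> real" where
  "mollifier x = rho0 x / (LINT y|lborel. rho0 (y::'a))"

definition mollifier_eps :: "real \<Rightarrow> 'a::euclidean_space \<Rightarrow> real" where
  "mollifier_eps \<epsilon> x = mollifier ((1/\<epsilon>) *\<^sub>R x) / \<epsilon> ^ DIM('a)"

definition moll_conv :: "'a::euclidean_space set \<Rightarrow> real \<Rightarrow> ('a \<Rightarrow> real) \<Rightarrow> 'a \<Rightarrow> real" where
  "moll_conv \<Omega> \<epsilon> f x = (LINT y:\<Omega>|lborel. f y * mollifier_eps \<epsilon> (x - y))"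

definition divergence :: "('a::euclidean_space \<Rightarrow> 'a) \<Rightarrow> 'a \<Rightarrow> real" where
  "divergence g x = (\<Sum>i\<in>Basis. frechet_derivative g (at x) i \<bullet> i)"

definition BV_test_fields :: "'a::euclidean_space set \<Rightarrow> ('a \<Rightarrow> 'a) set" where
  "BV_test_fields \<Omega> = {g. C1_everywhere g \<and> compact (closure {x. g x \<noteq> 0}) \<and>
       closure {x. g x \<noteq> 0} \<subseteq> \<Omega> \<and> (\<forall>x. norm (g x) \<le> 1)}"

definition total_variation :: "'a::euclidean_space set \<Rightarrow> ('a \<Rightarrow> real) \<Rightarrow> ereal" where
  "total_variation \<Omega> f =
     (SUP g\<in>BV_test_fields \<Omega>. ereal (LINT x:\<Omega>|lborel. f x * divergence g x))"

definition BV_norm :: "'a::euclidean_space set \<Rightarrow> ('a \<Rightarrow> real) \<Rightarrow> ereal" where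
  "BV_norm \<Omega> f = ereal (LINT x:\<Omega>|lborel. \<bar>f x\<bar>) + total_variation \<Omega> f"

definition BV_bounded :: "'a::euclidean_space set \<Rightarrow> (nat \<Rightarrow> 'a \<Rightarrow> real) \<Rightarrow> bool" where
  "BV_bounded \<Omega> F \<longleftrightarrow> (\<exists>M::real. \<forall>n. set_integrable lborel \<Omega> (F n) \<and> BV_norm \<Omega> (F n) \<le> ereal M)"

end

theory Submission
  imports Defs
begin

text \<open>
  The mollified data are bounded by \<open>c M\<close> and \<open>c M\<close>-Lipschitz, where \<open>M\<close> bounds the
  \<open>L\<^sup>1\<close> norms of the \<open>f0 n\<close> and \<open>c\<close> depends only on \<open>\<epsilon>\<close>. The inverse flows are Lipschitz
  uniformly in \<open>n\<close>: admissibility makes each \<open>\<iota> w\<close> Lipschitz with constant \<open>norm w / C\<close>, so on a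
  time interval carrying at most \<open>C / 2\<close> of the mass of \<open>norm (v n)\<close> the distance between two
  trajectories changes by at most a factor 2; by the uniform \<open>L\<^sup>2\<close> bound, \<open>[0, 1]\<close> splits into a
  fixed number \<open>m\<close> of such intervals, giving the Lipschitz constant \<open>2 ^ m\<close>. Finally, a bounded
  \<open>\<Lambda>\<close>-Lipschitz function on a bounded open set has total variation at most \<open>N \<Lambda> |\<Omega>|\<close>: tested
  against a field \<open>g\<close>, each partial derivative of \<open>g\<close> is the limit of difference quotients, which
  translation invariance of Lebesgue measure moves onto \<open>F\<close>, and dominated convergence passes to the
  limit.
\<close>

section \<open>The standard mollifier\<close>

definition bump_profile :: "real \<Rightarrow> real" where
  "bump_profile s = (if s < 1 then exp (1 / (s - 1)) else 0)"

lemma mult_exp_minus_le_4: "u * exp (- u) \<le> (4::real)"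
proof -
  have "u \<le> 4 * exp u"
    using exp_ge_add_one_self[of u] exp_gt_zero[of u] by linarith
  thus ?thesis by (simp add: exp_minus field_simps)
qed

lemma power2_mult_exp_minus_le_4:
  assumes "0 \<le> u" shows "u\<^sup>2 * exp (- u) \<le> (4::real)"
proof -
  have "u / 2 \<le> exp (u / 2)"
    using exp_ge_add_one_self[of "u / 2"] by linarith
  hence "(u / 2)\<^sup>2 \<le> (exp (u / 2))\<^sup>2"
    using assms by (intro power_mono) auto
  also have "\<dots> = exp u" by (simp add: exp_double[symmetric])
  finally show ?thesis by (simp add: exp_minus power_divide field_simps)
qed

lemma bump_profile_lipschitz_below_1:
  assumes "s < s'" "s' < 1"
  shows "\<bar>bump_profile s - bump_profile s'\<bar> \<le> 4 * (s' - s)"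
proof -
  define h' where "h' r = - exp (1 / (r - 1)) / (r - 1)\<^sup>2" for r :: real
  have "(bump_profile has_real_derivative h' r) (at r)" if "r < 1" for r
  proof (rule has_field_derivative_transform_within_open[where S="{..<1}"])
    show "((\<lambda>r. exp (1 / (r - 1))) has_real_derivative h' r) (at r)"
      using that unfolding h'_def
      by (auto intro!: derivative_eq_intros simp: power2_eq_square field_simps)
  qed (use that in \<open>auto simp: bump_profile_def\<close>)
  with MVT2[OF assms(1)] assms obtain z where z: "s < z" "z < s'"
    and mvt: "bump_profile s' - bump_profile s = (s' - s) * h' z"
    by (metis less_trans order.strict_trans1)
  have "1 / (z - 1) = - (1 / (1 - z))" "(z - 1)\<^sup>2 = (1 - z)\<^sup>2"
    by (simp_all add: minus_divide_right power2_commute)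
  hence "\<bar>h' z\<bar> = (1 / (1 - z))\<^sup>2 * exp (- (1 / (1 - z)))"
    by (simp add: h'_def power_one_over)
  also have "\<dots> \<le> 4"
    using z assms by (intro power2_mult_exp_minus_le_4) simp
  finally have "(s' - s) * \<bar>h' z\<bar> \<le> (s' - s) * 4"
    using assms by (intro mult_left_mono) auto
  moreover have "\<bar>bump_profile s - bump_profile s'\<bar> = (s' - s) * \<bar>h' z\<bar>"
    unfolding abs_minus_commute[of "bump_profile s"] mvt using assms by (simp add: abs_mult)
  ultimately show ?thesis by simp
qed

lemma bump_profile_le:
  assumes "s < 1" shows "bump_profile s \<le> 4 * (1 - s)"
proof -
  have "1 / (1 - s) * bump_profile s \<le> 4"
    using mult_exp_minus_le_4[of "1 / (1 - s)"] assms
    by (simp add: bump_profile_def minus_divide_right)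
  thus ?thesis using assms by (simp add: field_simps)
qed

lemma bump_profile_lipschitz: "\<bar>bump_profile s - bump_profile s'\<bar> \<le> 4 * \<bar>s - s'\<bar>"
proof -
  have *: "\<bar>bump_profile s - bump_profile s'\<bar> \<le> 4 * (s' - s)" if "s \<le> s'" for s s'
  proof -
    consider "s = s'" | "s < s'" "s' < 1" | "s < 1" "1 \<le> s'" | "1 \<le> s"
      using \<open>s \<le> s'\<close> by linarith
    thus ?thesis
    proof cases
      case 2 thus ?thesis by (rule bump_profile_lipschitz_below_1)
    next
      case 3 thus ?thesis
        using bump_profile_le[of s] by (simp add: bump_profile_def)
    qed (use that in \<open>auto simp: bump_profile_def\<close>)
  qed
  show ?thesis
    using *[of s s'] *[of s' s] by (cases "s \<le> s'") (auto simp: abs_minus_commute)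
qed

lemma rho0_eq_bump_profile: "rho0 x = bump_profile ((norm x)\<^sup>2)"
  using abs_square_less_1[of "norm x"] by (simp add: rho0_def bump_profile_def)

lemma rho0_nonneg: "0 \<le> rho0 x"
  by (simp add: rho0_def)

lemma rho0_le_1: "rho0 x \<le> 1"
  using abs_square_less_1[of "norm x"] by (auto simp: rho0_def divide_nonpos_neg)

lemma rho0_eq_0: "1 \<le> norm x \<Longrightarrow> rho0 x = 0"
  by (simp add: rho0_def)

lemma rho0_measurable [measurable]: "rho0 \<in> borel_measurable borel"
  unfolding rho0_def by measurable

lemma rho0_lipschitz_if_norm_gt_2:
  assumes "2 < norm y"
  shows "\<bar>rho0 x - rho0 y\<bar> \<le> 16 * norm (x - y)"
proof (cases "norm x < 1")
  case True
  have "norm y \<le> norm x + norm (x - y)"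
    using norm_triangle_ineq[of x "y - x"] by (simp add: norm_minus_commute)
  thus ?thesis
    using True assms rho0_eq_0[of y] rho0_nonneg[of x] rho0_le_1[of x] by simp
qed (use assms rho0_eq_0[of x] rho0_eq_0[of y] in simp)

lemma rho0_lipschitz: "\<bar>rho0 x - rho0 y\<bar> \<le> 16 * norm (x - y)"
proof -
  consider "norm x \<le> 2" "norm y \<le> 2" | "2 < norm y" | "2 < norm x"
    by linarith
  thus ?thesis
  proof cases
    case 1
    have "\<bar>rho0 x - rho0 y\<bar> \<le> 4 * \<bar>(norm x)\<^sup>2 - (norm y)\<^sup>2\<bar>"
      unfolding rho0_eq_bump_profile by (rule bump_profile_lipschitz)
    also have "(norm x)\<^sup>2 - (norm y)\<^sup>2 = (norm x + norm y) * (norm x - norm y)"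
      by (simp add: power2_eq_square algebra_simps)
    also have "4 * \<bar>\<dots>\<bar> = 4 * ((norm x + norm y) * \<bar>norm x - norm y\<bar>)"
      by (simp add: abs_mult)
    also have "\<dots> \<le> 4 * (4 * norm (x - y))"
      using 1 norm_triangle_ineq3[of x y]
      by (intro mult_left_mono mult_mono) auto
    finally show ?thesis by simp
  next
    case 2 thus ?thesis by (rule rho0_lipschitz_if_norm_gt_2)
  next
    case 3 thus ?thesis
      using rho0_lipschitz_if_norm_gt_2[of x y] by (simp add: abs_minus_commute norm_minus_commute)
  qed
qed

lemma mollifier_eps_measurable [measurable]: "mollifier_eps \<epsilon> \<in> borel_measurable borel"
  unfolding mollifier_eps_def mollifier_def by measurable

lemma mollifier_eps_bounded_lipschitz:
  fixes \<epsilon> :: real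
  assumes "0 < \<epsilon>"
  obtains c where "\<And>z::'a::euclidean_space. \<bar>mollifier_eps \<epsilon> z\<bar> \<le> c"
    and "\<And>z z'::'a. \<bar>mollifier_eps \<epsilon> z - mollifier_eps \<epsilon> z'\<bar> \<le> c * norm (z - z')"
proof
  define k where "k = \<bar>1 / (LINT y|lborel. rho0 (y::'a)) / \<epsilon> ^ DIM('a)\<bar>"
  have eq: "\<bar>mollifier_eps \<epsilon> z\<bar> = rho0 ((1 / \<epsilon>) *\<^sub>R z) * k" for z :: 'a
    by (simp add: mollifier_eps_def mollifier_def k_def abs_mult rho0_nonneg)
  have eq': "\<bar>mollifier_eps \<epsilon> z - mollifier_eps \<epsilon> z'\<bar>
      = \<bar>rho0 ((1 / \<epsilon>) *\<^sub>R z) - rho0 ((1 / \<epsilon>) *\<^sub>R z')\<bar> * k" for z z' :: 'a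
    by (simp add: mollifier_eps_def mollifier_def k_def abs_mult[symmetric] diff_divide_distrib[symmetric])
  show "\<bar>mollifier_eps \<epsilon> z\<bar> \<le> max k (16 * k / \<epsilon>)" for z :: 'a
    unfolding eq using rho0_le_1 rho0_nonneg
    by (intro max.coboundedI1 mult_left_le_one_le) (auto simp: k_def)
  show "\<bar>mollifier_eps \<epsilon> z - mollifier_eps \<epsilon> z'\<bar> \<le> max k (16 * k / \<epsilon>) * norm (z - z')"
    for z z' :: 'a
  proof -
    have "\<bar>mollifier_eps \<epsilon> z - mollifier_eps \<epsilon> z'\<bar> \<le> 16 * norm ((1 / \<epsilon>) *\<^sub>R (z - z')) * k"
      unfolding eq' scaleR_diff_right by (intro mult_right_mono rho0_lipschitz) (auto simp: k_def)
    also have "\<dots> = 16 * k / \<epsilon> * norm (z - z')"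
      using assms by simp
    also have "\<dots> \<le> max k (16 * k / \<epsilon>) * norm (z - z')"
      by (intro mult_right_mono) auto
    finally show ?thesis .
  qed
qed

section \<open>Convolution with a bounded Lipschitz kernel\<close>

lemma set_integral_abs_le:
  fixes f g :: "_ \<Rightarrow> real"
  assumes "set_integrable M A f" "set_integrable M A g" "\<And>x. x \<in> A \<Longrightarrow> \<bar>f x\<bar> \<le> g x"
  shows "\<bar>LINT x:A|M. f x\<bar> \<le> (LINT x:A|M. g x)"
proof -
  have "\<bar>LINT x:A|M. f x\<bar> \<le> (LINT x:A|M. \<bar>f x\<bar>)"
    unfolding set_lebesgue_integral_def by (rule order_trans[OF integral_abs_bound]) (simp add: abs_mult)
  also have "\<dots> \<le> (LINT x:A|M. g x)"
    using assms set_integrable_abs by (intro set_integral_mono) auto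
  finally show ?thesis .
qed

context
  fixes \<Omega> :: "'a::euclidean_space set" and f \<rho> :: "'a \<Rightarrow> real" and c M :: real
  assumes f_integrable: "set_integrable lborel \<Omega> f"
    and f_L1: "(LINT y:\<Omega>|lborel. \<bar>f y\<bar>) \<le> M"
    and \<rho>_measurable: "\<rho> \<in> borel_measurable borel"
    and \<rho>_bounded: "\<And>z. \<bar>\<rho> z\<bar> \<le> c"
begin

lemma abs_convolution_integrand_le: "\<bar>f y * \<rho> (x - y)\<bar> \<le> c * \<bar>f y\<bar>"
  using mult_left_mono[OF \<rho>_bounded[of "x - y"] abs_ge_zero[of "f y"]]
  by (simp add: abs_mult mult.commute)

lemma set_integrable_convolution: "set_integrable lborel \<Omega> (\<lambda>y. f y * \<rho> (x - y))"
proof (rule set_integrable_bound[OF set_integrable_mult_right[OF set_integrable_abs[OF f_integrable]]])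
  have "(\<lambda>y. indicator \<Omega> y *\<^sub>R f y) \<in> borel_measurable lborel"
    using f_integrable unfolding set_integrable_def by (rule borel_measurable_integrable)
  moreover have "(\<lambda>y. \<rho> (x - y)) \<in> borel_measurable lborel"
    using \<rho>_measurable by (simp add: measurable_lborel2)
  ultimately have "(\<lambda>y. (indicator \<Omega> y *\<^sub>R f y) * \<rho> (x - y)) \<in> borel_measurable lborel"
    by (rule borel_measurable_times)
  thus "set_borel_measurable lborel \<Omega> (\<lambda>y. f y * \<rho> (x - y))"
    unfolding set_borel_measurable_def by (simp add: mult.assoc)
  show "AE y in lborel. y \<in> \<Omega> \<longrightarrow> norm (f y * \<rho> (x - y)) \<le> norm (c * \<bar>f y\<bar>)"
    using abs_convolution_integrand_le \<rho>_bounded[of 0] by (simp add: abs_mult)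
qed

lemma convolution_abs_le: "\<bar>LINT y:\<Omega>|lborel. f y * \<rho> (x - y)\<bar> \<le> c * M"
proof -
  have "\<bar>LINT y:\<Omega>|lborel. f y * \<rho> (x - y)\<bar> \<le> (LINT y:\<Omega>|lborel. c * \<bar>f y\<bar>)"
    using set_integrable_convolution set_integrable_abs[OF f_integrable] abs_convolution_integrand_le
    by (intro set_integral_abs_le set_integrable_mult_right) auto
  also have "\<dots> \<le> c * M"
    using f_L1 \<rho>_bounded[of 0] by (simp add: mult_left_mono)
  finally show ?thesis .
qed

lemma convolution_lipschitz:
  assumes \<rho>_lipschitz: "\<And>z z'. \<bar>\<rho> z - \<rho> z'\<bar> \<le> c * norm (z - z')"
  shows "\<bar>(LINT y:\<Omega>|lborel. f y * \<rho> (x - y)) - (LINT y:\<Omega>|lborel. f y * \<rho> (x' - y))\<bar>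
      \<le> c * M * norm (x - x')"
proof -
  have "\<bar>f y * \<rho> (x - y) - f y * \<rho> (x' - y)\<bar> \<le> c * norm (x - x') * \<bar>f y\<bar>" for y
    using mult_left_mono[OF \<rho>_lipschitz[of "x - y" "x' - y"] abs_ge_zero[of "f y"]]
    by (simp add: abs_mult right_diff_distrib[symmetric] mult_ac)
  hence "\<bar>LINT y:\<Omega>|lborel. f y * \<rho> (x - y) - f y * \<rho> (x' - y)\<bar>
      \<le> (LINT y:\<Omega>|lborel. c * norm (x - x') * \<bar>f y\<bar>)"
    using set_integrable_convolution set_integrable_abs[OF f_integrable]
    by (intro set_integral_abs_le set_integral_diff set_integrable_mult_right) auto
  also have "\<dots> \<le> c * norm (x - x') * M"
    using f_L1 \<rho>_bounded[of 0] by (simp add: mult_left_mono)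
  finally show ?thesis
    using set_integrable_convolution by (simp add: set_integral_diff mult_ac)
qed

end

lemma moll_conv_bounded_lipschitz:
  fixes \<Omega> :: "'a::euclidean_space set"
  assumes "0 < \<epsilon>"
  obtains c where "0 \<le> c"
    and "\<And>f M x. set_integrable lborel \<Omega> f \<Longrightarrow> (LINT y:\<Omega>|lborel. \<bar>f y\<bar>) \<le> M \<Longrightarrow>
      \<bar>moll_conv \<Omega> \<epsilon> f x\<bar> \<le> c * M"
    and "\<And>f M x x'. set_integrable lborel \<Omega> f \<Longrightarrow> (LINT y:\<Omega>|lborel. \<bar>f y\<bar>) \<le> M \<Longrightarrow>
      \<bar>moll_conv \<Omega> \<epsilon> f x - moll_conv \<Omega> \<epsilon> f x'\<bar> \<le> c * M * norm (x - x')"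
proof -
  obtain c where bounded: "\<And>z::'a. \<bar>mollifier_eps \<epsilon> z\<bar> \<le> c"
    and lipschitz: "\<And>z z'::'a. \<bar>mollifier_eps \<epsilon> z - mollifier_eps \<epsilon> z'\<bar> \<le> c * norm (z - z')"
    using mollifier_eps_bounded_lipschitz[OF assms] by blast
  show thesis
  proof (rule that)
    show "0 \<le> c" using bounded[of 0] by linarith
    show "\<bar>moll_conv \<Omega> \<epsilon> f x\<bar> \<le> c * M"
      if "set_integrable lborel \<Omega> f" "(LINT y:\<Omega>|lborel. \<bar>f y\<bar>) \<le> M" for f M x
      unfolding moll_conv_def by (rule convolution_abs_le[OF that mollifier_eps_measurable bounded])
    show "\<bar>moll_conv \<Omega> \<epsilon> f x - moll_conv \<Omega> \<epsilon> f x'\<bar> \<le> c * M * norm (x - x')"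
      if "set_integrable lborel \<Omega> f" "(LINT y:\<Omega>|lborel. \<bar>f y\<bar>) \<le> M" for f M x x'
      unfolding moll_conv_def
      by (rule convolution_lipschitz[OF that mollifier_eps_measurable bounded lipschitz])
  qed
qed

section \<open>Fields of an admissible space are Lipschitz\<close>

lemma bdd_above_norm_image:
  fixes g :: "'a::heine_borel \<Rightarrow> 'b::real_normed_vector"
  assumes "continuous_on UNIV g" "bounded S"
  shows "bdd_above ((\<lambda>x. norm (g x)) ` S)"
proof -
  have "compact (g ` closure S)"
    using assms by (intro compact_continuous_image continuous_on_subset[OF assms(1)])
      (auto simp: compact_closure)
  then obtain b where "\<And>x. x \<in> closure S \<Longrightarrow> norm (g x) \<le> b"
    by (metis compact_imp_bounded bounded_iff image_eqI)
  thus ?thesis using closure_subset by (intro bdd_aboveI2[of _ _ b]) blast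
qed

lemma blinfun_derivative_eq_0_outside_closure:
  assumes "(w has_derivative blinfun_apply D) (at x)" "\<And>y. y \<notin> S \<Longrightarrow> w y = 0"
    and "x \<notin> closure S"
  shows "D = 0"
proof -
  have "(w has_derivative (\<lambda>_. 0)) (at x)"
  proof (rule has_derivative_transform_within_open[where s="- closure S"])
    show "\<And>y. y \<in> - closure S \<Longrightarrow> 0 = w y"
      using assms(2) closure_subset by fastforce
  qed (use assms(3) in auto)
  hence "blinfun_apply D = (\<lambda>_. 0)"
    using has_derivative_unique[OF assms(1)] by blast
  thus ?thesis by (metis blinfun_eqI zero_blinfun.rep_eq)
qed

lemma lipschitz_of_derivative_bounded_on_support:
  fixes w :: "'a::euclidean_space \<Rightarrow> 'b::real_normed_vector"
  assumes deriv: "\<And>x. (w has_derivative blinfun_apply (D x)) (at x)"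
    and cont: "continuous_on UNIV D"
    and support: "\<And>x. x \<notin> S \<Longrightarrow> w x = 0"
    and bound: "\<And>x. x \<in> S \<Longrightarrow> norm (D x) \<le> B" and "0 \<le> B"
  shows "norm (w p - w q) \<le> B * norm (p - q)"
proof (rule differentiable_bound[where S=UNIV and f'="\<lambda>x. blinfun_apply (D x)"])
  show "onorm (blinfun_apply (D x)) \<le> B" for x
  proof (cases "x \<in> closure S")
    case True
    thus ?thesis
      using continuous_on_closure_norm_le[OF continuous_on_subset[OF cont] _ True] bound
      by (auto simp: norm_blinfun.rep_eq)
  next
    case False
    thus ?thesis
      using blinfun_derivative_eq_0_outside_closure[OF deriv support] \<open>0 \<le> B\<close>
      by (simp add: norm_blinfun.rep_eq[symmetric])
  qed
qed (use deriv in auto)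

lemma lipschitz_of_C1_bounded_support:
  fixes g :: "'a::euclidean_space \<Rightarrow> 'b::real_normed_vector"
  assumes D: "\<And>x. (g has_derivative blinfun_apply (D x)) (at x)" and cont: "continuous_on UNIV D"
    and "bounded {x. g x \<noteq> 0}"
  obtains L where "\<And>x y. norm (g x - g y) \<le> L * norm (x - y)"
proof -
  obtain b where "\<And>x. g x \<noteq> 0 \<Longrightarrow> norm (D x) \<le> b"
    using bdd_above_norm_image[OF cont assms(3)] by (auto simp: bdd_above_def)
  hence bound: "\<And>x. x \<in> {x. g x \<noteq> 0} \<Longrightarrow> norm (D x) \<le> max b 0"
    by (simp add: le_max_iff_disj)
  have "norm (g x - g y) \<le> max b 0 * norm (x - y)" for x y
    by (rule lipschitz_of_derivative_bounded_on_support[where S="{x. g x \<noteq> 0}", OF D cont _ bound])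
      simp_all
  thus thesis by (rule that)
qed

lemma C1_0_lipschitz:
  assumes "w \<in> C1_0 \<Omega>" "bounded \<Omega>" "\<Omega> \<noteq> {}"
  shows "norm (w p - w q) \<le> (SUP x\<in>\<Omega>. onorm (frechet_derivative w (at x))) * norm (p - q)"
    and "(SUP x\<in>\<Omega>. onorm (frechet_derivative w (at x))) \<le> norm_1_inf \<Omega> w"
proof -
  obtain D where D: "\<And>x. (w has_derivative blinfun_apply (D x)) (at x)"
    and cont: "continuous_on UNIV D" and support: "\<And>x. x \<notin> \<Omega> \<Longrightarrow> w x = 0"
    using assms(1) unfolding C1_0_def C1_everywhere_def by blast
  have onorm_eq: "onorm (frechet_derivative w (at x)) = norm (D x)" for x
    using frechet_derivative_at[OF D[of x]] by (simp add: norm_blinfun.rep_eq)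
  define B where "B = (SUP x\<in>\<Omega>. norm (D x))"
  have le_B: "norm (D x) \<le> B" if "x \<in> \<Omega>" for x
    unfolding B_def using bdd_above_norm_image[OF cont assms(2)] that by (rule cSUP_upper2) simp
  from assms(3) obtain x0 where "x0 \<in> \<Omega>" by blast
  hence "0 \<le> B" using le_B norm_ge_zero order_trans by blast
  show "norm (w p - w q) \<le> (SUP x\<in>\<Omega>. onorm (frechet_derivative w (at x))) * norm (p - q)"
    unfolding onorm_eq B_def[symmetric]
    by (rule lipschitz_of_derivative_bounded_on_support[where S=\<Omega>, OF D cont support le_B \<open>0 \<le> B\<close>])
  have "continuous_on UNIV w"
    using D by (intro has_derivative_continuous_on) auto
  hence "norm (w x0) \<le> (SUP x\<in>\<Omega>. norm (w x))"
    using bdd_above_norm_image assms(2) \<open>x0 \<in> \<Omega>\<close> by (intro cSUP_upper2) auto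
  thus "(SUP x\<in>\<Omega>. onorm (frechet_derivative w (at x))) \<le> norm_1_inf \<Omega> w"
    unfolding norm_1_inf_def using norm_ge_zero[of "w x0"] by linarith
qed

lemma admissible_lipschitz:
  assumes "admissible \<Omega> \<iota>" "bounded \<Omega>"
  obtains C :: real where "0 < C"
    and "\<And>w p q. p \<in> \<Omega> \<Longrightarrow> q \<in> \<Omega> \<Longrightarrow> norm (\<iota> w p - \<iota> w q) \<le> norm w / C * norm (p - q)"
proof -
  from assms(1) obtain C where C: "0 < C" "\<And>w. C * norm_1_inf \<Omega> (\<iota> w) \<le> norm w"
    and range: "range \<iota> \<subseteq> C1_0 \<Omega>"
    unfolding admissible_def by blast
  have "norm (\<iota> w p - \<iota> w q) \<le> norm w / C * norm (p - q)" if "p \<in> \<Omega>" for w p q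
  proof -
    note lip = C1_0_lipschitz[of "\<iota> w" \<Omega>, OF _ assms(2)]
    have "C * (SUP x\<in>\<Omega>. onorm (frechet_derivative (\<iota> w) (at x))) \<le> norm w"
      using lip(2) range that C by (intro order_trans[OF _ C(2)] mult_left_mono) auto
    hence "(SUP x\<in>\<Omega>. onorm (frechet_derivative (\<iota> w) (at x))) \<le> norm w / C"
      using C(1) by (simp add: field_simps)
    hence "(SUP x\<in>\<Omega>. onorm (frechet_derivative (\<iota> w) (at x))) * norm (p - q) \<le> norm w / C * norm (p - q)"
      by (rule mult_right_mono) simp
    thus ?thesis
      using lip(1)[of p q] range that by fastforce
  qed
  with C(1) show thesis by (rule that)
qed

section \<open>Uniformly Lipschitz inverse flows\<close>

lemma in_L2V_integrable_on:
  assumes "in_L2V v"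
  shows "(\<lambda>s. (norm (v s))\<^sup>2) integrable_on {0..1}"
    and "integral {0..1} (\<lambda>s. (norm (v s))\<^sup>2) = (L2V_norm v)\<^sup>2"
    and "(\<lambda>s. norm (v s)) integrable_on {0..1}"
    and "0 \<le> L2V_norm v"
proof -
  have "set_integrable lborel {0..1::real} (\<lambda>s. (norm (v s))\<^sup>2)"
    using assms unfolding in_L2V_def by blast
  note eq = set_borel_integral_eq_integral[OF this]
  show sq: "(\<lambda>s. (norm (v s))\<^sup>2) integrable_on {0..1}"
    by (rule eq(1))
  have "0 \<le> integral {0..1} (\<lambda>s. (norm (v s))\<^sup>2)"
    by (rule Henstock_Kurzweil_Integration.integral_nonneg[OF sq]) simp
  thus "integral {0..1} (\<lambda>s. (norm (v s))\<^sup>2) = (L2V_norm v)\<^sup>2" "0 \<le> L2V_norm v"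
    unfolding L2V_norm_def eq(2) by simp_all
  have "(\<lambda>s. sqrt ((norm (v s))\<^sup>2)) \<in> borel_measurable (lebesgue_on {0..1})"
    using measurable_compose[OF integrable_imp_measurable[OF sq] borel_measurable_sqrt]
    by (simp add: o_def)
  hence meas: "(\<lambda>s. norm (v s)) \<in> borel_measurable (lebesgue_on {0..1})"
    by simp
  have bound:  "norm (norm (v s)) \<le> (norm (v s))\<^sup>2 + 1" for s
  proof (cases "norm (v s) \<le> 1")
    case False
    hence "norm (v s) * 1 \<le> norm (v s) * norm (v s)" by (intro mult_left_mono) auto
    thus ?thesis by (simp add: power2_eq_square)
  qed (simp add: add_increasing)
  show "(\<lambda>s. norm (v s)) integrable_on {0..1}"
    by (rule measurable_bounded_by_integrable_imp_integrable[OF meas integrable_add[OF sq integrable_const_ivl] bound])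
      simp
qed

lemma integral_norm_le_short_interval:
  assumes L2: "in_L2V v" "L2V_norm v \<le> K" and "0 < C"
    and ab: "0 \<le> a" "a \<le> b" "b \<le> 1" "b - a \<le> C\<^sup>2 / (4 * (K\<^sup>2 + 1))"
  shows "integral {a..b} (\<lambda>s. norm (v s)) \<le> C / 2"
proof -
  define \<alpha> where "\<alpha> = C / (2 * (K\<^sup>2 + 1))"
  have "0 < K\<^sup>2 + 1" by (simp add: add_nonneg_pos)
  hence "0 < \<alpha>" using \<open>0 < C\<close> by (simp add: \<alpha>_def)
  note L2int = in_L2V_integrable_on[OF L2(1)]
  have sub: "{a..b} \<subseteq> {0..1}" using ab by auto
  have sq: "(\<lambda>s. (norm (v s))\<^sup>2) integrable_on {a..b}"
    by (rule integrable_on_subinterval[OF L2int(1) sub])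
  have amgm: "norm (v s) \<le> \<alpha> / 2 * (norm (v s))\<^sup>2 + 1 / (2 * \<alpha>)" for s
  proof -
    have "0 \<le> (\<alpha> * norm (v s) - 1)\<^sup>2 / (2 * \<alpha>)" using \<open>0 < \<alpha>\<close> by simp
    thus ?thesis using \<open>0 < \<alpha>\<close> by (simp add: power2_eq_square field_simps)
  qed
  have "integral {a..b} (\<lambda>s. norm (v s)) \<le> integral {a..b} (\<lambda>s. \<alpha> / 2 * (norm (v s))\<^sup>2 + 1 / (2 * \<alpha>))"
    using amgm integrable_on_subinterval[OF L2int(3) sub] sq
    by (intro integral_le integrable_add integrable_on_mult_right integrable_const_ivl) auto
  also have "\<dots> = integral {a..b} (\<lambda>s. \<alpha> / 2 * (norm (v s))\<^sup>2) + integral {a..b} (\<lambda>s. 1 / (2 * \<alpha>))"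
    using sq by (intro integral_add integrable_on_mult_right) auto
  also have "\<dots> = \<alpha> / 2 * integral {a..b} (\<lambda>s. (norm (v s))\<^sup>2) + (b - a) / (2 * \<alpha>)"
    using ab by (simp only: integral_mult_right integral_const_real content_real) simp
  also have "\<dots> \<le> \<alpha> / 2 * K\<^sup>2 + C / 4"
  proof (rule add_mono)
    have "integral {a..b} (\<lambda>s. (norm (v s))\<^sup>2) \<le> (L2V_norm v)\<^sup>2"
      using integral_subset_le[OF sub sq L2int(1)] L2int(2) by simp
    also have "\<dots> \<le> K\<^sup>2"
      using L2(2) L2int(4) by (intro power_mono)
    finally show "\<alpha> / 2 * integral {a..b} (\<lambda>s. (norm (v s))\<^sup>2) \<le> \<alpha> / 2 * K\<^sup>2"
      using \<open>0 < \<alpha>\<close> by simp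
    show "(b - a) / (2 * \<alpha>) \<le> C / 4"
      using ab(4) \<open>0 < \<alpha>\<close> \<open>0 < C\<close> \<open>0 < K\<^sup>2 + 1\<close>
      by (simp add: \<alpha>_def field_simps power2_eq_square)
  qed
  also have "\<dots> \<le> C / 2"
    using \<open>0 < C\<close> \<open>0 < K\<^sup>2 + 1\<close> by (simp add: \<alpha>_def field_simps)
  finally show ?thesis .
qed

context
  fixes \<Omega> :: "'a::euclidean_space set" and \<iota> :: "'v::{real_inner,complete_space} \<Rightarrow> 'a \<Rightarrow> 'a"
    and v :: "real \<Rightarrow> 'v" and \<phi> :: "real \<Rightarrow> 'a \<Rightarrow> 'a"
  assumes flow: "is_flow \<Omega> \<iota> v \<phi>"
begin

lemma flow_in_domain: "t \<in> {0..1} \<Longrightarrow> x \<in> \<Omega> \<Longrightarrow> \<phi> t x \<in> \<Omega>"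
  using flow unfolding is_flow_def by (meson bij_betwE)

lemma flow_has_integral:
  assumes "x \<in> \<Omega>" "0 \<le> a" "a \<le> b" "b \<le> 1"
  shows "((\<lambda>r. \<iota> (v r) (\<phi> r x)) has_integral (\<phi> b x - \<phi> a x)) {a..b}"
proof -
  let ?f = "\<lambda>r. \<iota> (v r) (\<phi> r x)"
  have from_0: "(?f has_integral (\<phi> t x - x)) {0..t}" if "t \<in> {0..1}" for t
    using flow assms(1) that unfolding is_flow_def by blast
  have int: "?f integrable_on {0..b}"
    using assms by (intro has_integral_integrable[OF from_0]) auto
  have "integral {0..a} ?f + integral {a..b} ?f = integral {0..b} ?f"
    by (rule Henstock_Kurzweil_Integration.integral_combine[OF assms(2,3) int])
  hence "integral {a..b} ?f = \<phi> b x - \<phi> a x"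
    using integral_unique[OF from_0[of a]] integral_unique[OF from_0[of b]] assms
    by (simp add: algebra_simps)
  moreover have "?f integrable_on {a..b}"
    by (rule integrable_on_subinterval[OF int]) (use assms in auto)
  ultimately show ?thesis
    using integrable_integral by metis
qed

end

context
  fixes \<Omega> :: "'a::euclidean_space set" and \<iota> :: "'v::{real_inner,complete_space} \<Rightarrow> 'a \<Rightarrow> 'a"
    and v :: "real \<Rightarrow> 'v" and \<phi> :: "real \<Rightarrow> 'a \<Rightarrow> 'a" and C :: real
  assumes flow: "is_flow \<Omega> \<iota> v \<phi>" and L2: "in_L2V v" and C: "0 < C"
    and lip: "\<And>w p q. p \<in> \<Omega> \<Longrightarrow> q \<in> \<Omega> \<Longrightarrow> norm (\<iota> w p - \<iota> w q) \<le> norm w / C * norm (p - q)"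
begin

lemma flow_difference_change_le:
  assumes xy: "x \<in> \<Omega>" "y \<in> \<Omega>" and ab: "0 \<le> a" "a \<le> b" "b \<le> 1"
    and S: "\<And>r. r \<in> {a..b} \<Longrightarrow> norm (\<phi> r x - \<phi> r y) \<le> S"
  shows "norm ((\<phi> b x - \<phi> b y) - (\<phi> a x - \<phi> a y)) \<le> S / C * integral {a..b} (\<lambda>r. norm (v r))"
proof -
  have norm_int: "(\<lambda>r. norm (v r)) integrable_on {a..b}"
    using integrable_on_subinterval[OF in_L2V_integrable_on(3)[OF L2]] ab by auto
  have diff: "((\<lambda>r. \<iota> (v r) (\<phi> r x) - \<iota> (v r) (\<phi> r y)) has_integral
      (\<phi> b x - \<phi> a x) - (\<phi> b y - \<phi> a y)) {a..b}"
    using flow_has_integral[OF flow] xy ab by (intro has_integral_diff) auto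
  have "norm (integral {a..b} (\<lambda>r. \<iota> (v r) (\<phi> r x) - \<iota> (v r) (\<phi> r y)))
      \<le> integral {a..b} (\<lambda>r. S / C * norm (v r))"
  proof (rule integral_norm_bound_integral[OF has_integral_integrable[OF diff]])
    show "(\<lambda>r. S / C * norm (v r)) integrable_on {a..b}"
      using norm_int by (rule integrable_on_mult_right)
    show "norm (\<iota> (v r) (\<phi> r x) - \<iota> (v r) (\<phi> r y)) \<le> S / C * norm (v r)" if "r \<in> {a..b}" for r
    proof -
      have "norm (\<iota> (v r) (\<phi> r x) - \<iota> (v r) (\<phi> r y)) \<le> norm (v r) / C * norm (\<phi> r x - \<phi> r y)"
        using that ab xy by (intro lip flow_in_domain[OF flow]) auto
      also have "\<dots> \<le> norm (v r) / C * S"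
        using S[OF that] C by (intro mult_left_mono) auto
      finally show ?thesis using C by (simp add: field_simps)
    qed
  qed
  thus ?thesis
    by (simp add: integral_unique[OF diff] algebra_simps)
qed

lemma flow_distance_step:
  assumes "bounded \<Omega>" and xy: "x \<in> \<Omega>" "y \<in> \<Omega>" and ab: "0 \<le> a" "a \<le> b" "b \<le> 1"
    and small: "integral {a..b} (\<lambda>r. norm (v r)) \<le> C / 2"
  shows "norm (\<phi> a x - \<phi> a y) \<le> 2 * norm (\<phi> b x - \<phi> b y)"
proof -
  define d where "d r = norm (\<phi> r x - \<phi> r y)" for r
  obtain R where R: "\<And>z. z \<in> \<Omega> \<Longrightarrow> norm z \<le> R"
    using \<open>bounded \<Omega>\<close> unfolding bounded_iff by blast
  have "d r \<le> R + R" if "r \<in> {a..b}" for r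
    unfolding d_def using that ab xy
    by (intro order_trans[OF norm_triangle_ineq4] add_mono R flow_in_domain[OF flow]) auto
  hence bdd: "bdd_above (d ` {a..b})" by (intro bdd_aboveI2) blast
  define S where "S = (SUP r\<in>{a..b}. d r)"
  have d_le_S: "d r \<le> S" if "r \<in> {a..b}" for r
    unfolding S_def using that bdd by (rule cSUP_upper)
  have "0 \<le> S" using d_le_S[of a] ab by (simp add: d_def) (meson norm_ge_zero order_trans)
  \<comment> \<open>every distance on \<open>[a, b]\<close> is within \<open>S / 2\<close> of \<open>d b\<close>, hence \<open>S \<le> 2 * d b\<close>\<close>
  have "d r \<le> d b + S / 2" if r: "r \<in> {a..b}" for r
  proof -
    have "d r \<le> d b + norm ((\<phi> b x - \<phi> b y) - (\<phi> r x - \<phi> r y))"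
      unfolding d_def using norm_triangle_sub[of "\<phi> r x - \<phi> r y" "\<phi> b x - \<phi> b y"]
      by (simp add: norm_minus_commute)
    also have "norm ((\<phi> b x - \<phi> b y) - (\<phi> r x - \<phi> r y)) \<le> S / C * integral {r..b} (\<lambda>r. norm (v r))"
      using r ab d_le_S unfolding d_def by (intro flow_difference_change_le xy) auto
    also have "\<dots> \<le> S / C * integral {a..b} (\<lambda>r. norm (v r))"
      using r ab \<open>0 \<le> S\<close> C integrable_on_subinterval[OF in_L2V_integrable_on(3)[OF L2]]
      by (intro mult_left_mono integral_subset_le) auto
    also have "\<dots> \<le> S / C * (C / 2)"
      using small \<open>0 \<le> S\<close> C by (intro mult_left_mono) auto
    finally show ?thesis using C by simp
  qed
  hence "S \<le> d b + S / 2"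
    unfolding S_def using ab by (intro cSUP_least) auto
  thus ?thesis using d_le_S[of a] ab unfolding d_def by simp
qed

lemma flow_expansion_bound:
  assumes "bounded \<Omega>" "L2V_norm v \<le> K" and xy: "x \<in> \<Omega>" "y \<in> \<Omega>" and t: "t \<in> {0..1}"
  shows "norm (x - y) \<le> 2 ^ (nat \<lceil>4 * (K\<^sup>2 + 1) / C\<^sup>2\<rceil> + 1) * norm (\<phi> t x - \<phi> t y)"
proof -
  define m where "m = nat \<lceil>4 * (K\<^sup>2 + 1) / C\<^sup>2\<rceil> + 1"
  define d where "d k = norm (\<phi> (k * t / m) x - \<phi> (k * t / m) y)" for k :: nat
  have "0 < m" by (simp add: m_def)
  have "0 < K\<^sup>2 + 1" by (simp add: add_nonneg_pos)
  have "t * (4 * (K\<^sup>2 + 1)) \<le> 4 * (K\<^sup>2 + 1)"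
    using t \<open>0 < K\<^sup>2 + 1\<close> by (simp add: mult_left_le_one_le)
  also have "\<dots> \<le> m * C\<^sup>2"
    using C pos_divide_le_eq[of "C\<^sup>2" "4 * (K\<^sup>2 + 1)" m] unfolding m_def by simp linarith
  finally have "t / m \<le> C\<^sup>2 / (4 * (K\<^sup>2 + 1))"
    using \<open>0 < m\<close> \<open>0 < K\<^sup>2 + 1\<close> by (simp add: field_simps)
  have step: "d k \<le> 2 * d (Suc k)" if "k < m" for k
  proof -
    have "real (Suc k) * t \<le> real m * 1"
      using that t by (intro mult_mono) auto
    hence "Suc k * t / m \<le> 1"
      using \<open>0 < m\<close> by (simp add: divide_le_eq)
    moreover have "Suc k * t / m - k * t / m = t / m"
      by (simp add: diff_divide_distrib[symmetric] algebra_simps)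
    ultimately show ?thesis
      unfolding d_def using t \<open>t / m \<le> _\<close> \<open>0 < m\<close> assms(1,2) xy C L2
      by (intro flow_distance_step integral_norm_le_short_interval)
        (auto simp: divide_right_mono mult_right_mono)
  qed
  have "d 0 \<le> 2 ^ k * d k" if "k \<le> m" for k
    using that
  proof (induction k)
    case (Suc k)
    thus ?case using step[of k] by (simp add: order_trans[OF Suc.IH])
  qed simp
  from this[of m] have "d 0 \<le> 2 ^ m * d m" by simp
  moreover have "d 0 = norm (x - y)"
    using flow xy unfolding d_def is_flow_def by simp
  moreover have "d m = norm (\<phi> t x - \<phi> t y)"
    using \<open>0 < m\<close> by (simp add: d_def)
  ultimately show ?thesis unfolding m_def[symmetric] by simp
qed

end

lemma flow_inverse_uniformly_lipschitz:
  fixes \<Omega> :: "'a::euclidean_space set" and \<iota> :: "'v::{real_inner,complete_space} \<Rightarrow> 'a \<Rightarrow> 'a"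
  assumes "admissible \<Omega> \<iota>" "bounded \<Omega>"
    and flow: "\<And>n. is_flow \<Omega> \<iota> (v n) (\<phi> n)" and L2: "\<And>n. in_L2V (v n)"
    and K: "\<And>n. L2V_norm (v n) \<le> K"
  obtains A :: real where "0 \<le> A"
    and "\<And>n t p q. t \<in> {0..1} \<Longrightarrow> p \<in> \<Omega> \<Longrightarrow> q \<in> \<Omega> \<Longrightarrow>
      norm (inv_into \<Omega> (\<phi> n t) p - inv_into \<Omega> (\<phi> n t) q) \<le> A * norm (p - q)"
proof -
  obtain C where C: "0 < C"
    and lip: "\<And>w p q. p \<in> \<Omega> \<Longrightarrow> q \<in> \<Omega> \<Longrightarrow> norm (\<iota> w p - \<iota> w q) \<le> norm w / C * norm (p - q)"
    using admissible_lipschitz[OF assms(1,2)] by blast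
  define A where "A = (2::real) ^ (nat \<lceil>4 * (K\<^sup>2 + 1) / C\<^sup>2\<rceil> + 1)"
  have "norm (inv_into \<Omega> (\<phi> n t) p - inv_into \<Omega> (\<phi> n t) q) \<le> A * norm (p - q)"
    if "t \<in> {0..1}" "p \<in> \<Omega>" "q \<in> \<Omega>" for n t p q
  proof -
    have "bij_betw (\<phi> n t) \<Omega> \<Omega>"
      using flow[of n] \<open>t \<in> {0..1}\<close> unfolding is_flow_def by blast
    hence "inv_into \<Omega> (\<phi> n t) z \<in> \<Omega>" "\<phi> n t (inv_into \<Omega> (\<phi> n t) z) = z" if "z \<in> \<Omega>" for z
      using that by (auto simp: bij_betw_def inv_into_into f_inv_into_f)
    thus ?thesis
      using flow_expansion_bound[OF flow[of n] L2[of n] C lip assms(2) K[of n], of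
          "inv_into \<Omega> (\<phi> n t) p" "inv_into \<Omega> (\<phi> n t) q" t] that
      unfolding A_def by simp
  qed
  moreover have "0 \<le> A" by (simp add: A_def)
  ultimately show thesis using that by blast
qed

section \<open>Total variation of bounded Lipschitz functions\<close>

lemma total_variation_nonneg: "0 \<le> total_variation \<Omega> f"
proof -
  have zero: "(\<lambda>_. 0) \<in> BV_test_fields \<Omega>"
    unfolding BV_test_fields_def C1_everywhere_def
    by (auto intro!: exI[of _ "\<lambda>_. 0"] simp: zero_blinfun.rep_eq)
  have "divergence (\<lambda>_. 0::'a) x = 0" for x
    using frechet_derivative_at[OF has_derivative_const[of "0::'a" "at x"]]
    by (simp add: divergence_def)
  moreover have "ereal (LINT x:\<Omega>|lborel. f x * divergence (\<lambda>_. 0) x) \<le> total_variation \<Omega> f"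
    unfolding total_variation_def by (rule SUP_upper[OF zero])
  ultimately show ?thesis by (simp add: zero_ereal_def)
qed

lemma L1_le_BV_norm: "ereal (LINT x:\<Omega>|lborel. \<bar>f x\<bar>) \<le> BV_norm \<Omega> f"
  unfolding BV_norm_def by (rule add_increasing2[OF total_variation_nonneg order_refl])

lemma BV_bounded_imp_L1_bounded:
  assumes "BV_bounded \<Omega> f"
  obtains M where "0 \<le> M" "\<And>n. set_integrable lborel \<Omega> (f n)"
    "\<And>n. (LINT x:\<Omega>|lborel. \<bar>f n x\<bar>) \<le> M"
proof -
  obtain M where int: "\<And>n. set_integrable lborel \<Omega> (f n)" and BV: "\<And>n. BV_norm \<Omega> (f n) \<le> ereal M"
    using assms unfolding BV_bounded_def by blast
  have L1: "(LINT x:\<Omega>|lborel. \<bar>f n x\<bar>) \<le> M" for n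
    using order_trans[OF L1_le_BV_norm BV] by simp
  have "0 \<le> (LINT x:\<Omega>|lborel. \<bar>f 0 x\<bar>)"
    unfolding set_lebesgue_integral_def by (intro Bochner_Integration.integral_nonneg) simp
  hence "0 \<le> M" using L1[of 0] by linarith
  from this int L1 show thesis by (rule that)
qed

lemma lborel_integral_translate:
  fixes f :: "'a::euclidean_space \<Rightarrow> 'b::{banach, second_countable_topology}"
  assumes "f \<in> borel_measurable borel"
  shows "integrable lborel (\<lambda>x. f (x + c)) \<longleftrightarrow> integrable lborel f"
    and "integral\<^sup>L lborel (\<lambda>x. f (x + c)) = integral\<^sup>L lborel f"
proof -
  have "integrable lborel (\<lambda>x. f (c + x)) \<longleftrightarrow> integrable (distr lborel borel ((+) c)) f"
    using assms by (subst integrable_distr_eq) auto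
  thus "integrable lborel (\<lambda>x. f (x + c)) \<longleftrightarrow> integrable lborel f"
    by (simp add: lborel_distr_plus add.commute)
  have "integral\<^sup>L lborel (\<lambda>x. f (c + x)) = integral\<^sup>L (distr lborel borel ((+) c)) f"
    using assms by (subst integral_distr) auto
  thus "integral\<^sup>L lborel (\<lambda>x. f (x + c)) = integral\<^sup>L lborel f"
    by (simp add: lborel_distr_plus add.commute)
qed

lemma integral_difference_quotient_le:
  fixes \<Omega> :: "'a::euclidean_space set" and F G :: "'a \<Rightarrow> real"
  assumes \<Omega>: "\<Omega> \<in> sets lborel" "emeasure lborel \<Omega> < \<infinity>"
    and F_meas: "(\<lambda>x. indicator \<Omega> x * F x) \<in> borel_measurable borel"
    and F_bounded: "\<And>x. x \<in> \<Omega> \<Longrightarrow> \<bar>F x\<bar> \<le> B"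
    and F_lipschitz: "\<And>x y. x \<in> \<Omega> \<Longrightarrow> y \<in> \<Omega> \<Longrightarrow> \<bar>F x - F y\<bar> \<le> \<Lambda> * norm (x - y)"
    and "0 \<le> \<Lambda>"
    and G_meas: "G \<in> borel_measurable borel" and G_bounded: "\<And>x. \<bar>G x\<bar> \<le> 1"
    and "0 < h" "norm e = 1"
    and G_support: "\<And>y. G y \<noteq> 0 \<Longrightarrow> y \<in> \<Omega> \<and> y - h *\<^sub>R e \<in> \<Omega>"
  shows "integral\<^sup>L lborel (\<lambda>x. indicator \<Omega> x * F x * ((G (x + h *\<^sub>R e) - G x) / h))
      \<le> \<Lambda> * measure lborel \<Omega>"
proof -
  define Fo where "Fo x = indicator \<Omega> x * F x" for x
  have Fo_meas: "Fo \<in> borel_measurable borel"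
    using F_meas unfolding Fo_def[abs_def] .
  have ind_int: "integrable lborel (\<lambda>x. k * indicator \<Omega> x :: real)" for k
    using \<Omega> by (intro integrable_mult_right integrable_real_indicator) auto
  have "integrable lborel (\<lambda>x. Fo x * G (x + a))" for a
  proof (rule Bochner_Integration.integrable_bound[OF ind_int[of B]])
    show "(\<lambda>x. Fo x * G (x + a)) \<in> borel_measurable lborel"
      using Fo_meas G_meas by (simp add: measurable_lborel2)
    have "\<bar>F x\<bar> * \<bar>G (x + a)\<bar> \<le> \<bar>B\<bar>" if "x \<in> \<Omega>" for x
      using mult_mono[OF F_bounded[OF that] G_bounded[of "x + a"]] abs_ge_zero[of "F x"]
        F_bounded[OF that]
      by linarith
    thus "AE x in lborel. norm (Fo x * G (x + a)) \<le> norm (B * indicator \<Omega> x)"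
      by (intro AE_I2) (simp add: Fo_def abs_mult split: split_indicator)
  qed
  note int_shift = this[of "h *\<^sub>R e"] and int = this[of 0, simplified]
  have shifted_meas: "(\<lambda>y. Fo (y - h *\<^sub>R e) * G y) \<in> borel_measurable borel"
    using Fo_meas G_meas by measurable
  have translate: "integrable lborel (\<lambda>y. Fo (y - h *\<^sub>R e) * G y)"
    "integral\<^sup>L lborel (\<lambda>x. Fo x * G (x + h *\<^sub>R e)) = integral\<^sup>L lborel (\<lambda>y. Fo (y - h *\<^sub>R e) * G y)"
    using lborel_integral_translate[OF shifted_meas, of "h *\<^sub>R e"] int_shift by simp_all
  \<comment> \<open>summation by parts: translating by \<open>h e\<close> moves the difference quotient from \<open>G\<close> onto \<open>F\<close>\<close>
  have "integral\<^sup>L lborel (\<lambda>x. Fo x * ((G (x + h *\<^sub>R e) - G x) / h))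
      = (integral\<^sup>L lborel (\<lambda>x. Fo x * G (x + h *\<^sub>R e)) - integral\<^sup>L lborel (\<lambda>x. Fo x * G x)) / h"
    using int_shift int by (simp add: right_diff_distrib)
  also have "\<dots> = integral\<^sup>L lborel (\<lambda>y. Fo (y - h *\<^sub>R e) * G y - Fo y * G y) / h"
    using translate int_shift int by simp
  also have "\<dots> \<le> integral\<^sup>L lborel (\<lambda>y. \<Lambda> * h * indicator \<Omega> y) / h"
  proof (rule divide_right_mono[OF integral_mono])
    show "integrable lborel (\<lambda>y. Fo (y - h *\<^sub>R e) * G y - Fo y * G y)"
      using translate(1) int by (rule Bochner_Integration.integrable_diff)
    show "integrable lborel (\<lambda>y. \<Lambda> * h * indicator \<Omega> y)"
      by (rule ind_int)
    show "Fo (y - h *\<^sub>R e) * G y - Fo y * G y \<le> \<Lambda> * h * indicator \<Omega> y" for y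
    proof (cases "G y = 0")
      case False
      with G_support have y: "y \<in> \<Omega>" "y - h *\<^sub>R e \<in> \<Omega>" by auto
      have "Fo (y - h *\<^sub>R e) * G y - Fo y * G y \<le> \<bar>F (y - h *\<^sub>R e) - F y\<bar> * \<bar>G y\<bar>"
        using y by (simp add: Fo_def abs_mult[symmetric] left_diff_distrib)
      also have "\<dots> \<le> \<Lambda> * norm (y - h *\<^sub>R e - y) * 1"
        using F_lipschitz[OF y(2,1)] G_bounded \<open>0 \<le> \<Lambda>\<close> by (intro mult_mono) auto
      finally show ?thesis
        using y \<open>0 < h\<close> \<open>norm e = 1\<close> by simp
    qed (use \<open>0 \<le> \<Lambda>\<close> \<open>0 < h\<close> in simp)
  qed (use \<open>0 < h\<close> in simp)
  also have "\<dots> = \<Lambda> * measure lborel \<Omega>"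
    using \<open>0 < h\<close> by simp
  finally show ?thesis
    by (simp add: Fo_def mult.assoc)
qed

lemma difference_quotient_tendsto:
  fixes G :: "'a::real_normed_vector \<Rightarrow> real"
  assumes G_deriv: "(G has_derivative G') (at x)" and "h \<longlonglongrightarrow> 0" "\<And>k. h k \<noteq> 0"
  shows "(\<lambda>k. (G (x + h k *\<^sub>R e) - G x) / h k) \<longlonglongrightarrow> G' e"
proof -
  have "((\<lambda>s. x + s *\<^sub>R e) has_derivative (\<lambda>s. s *\<^sub>R e)) (at 0)"
    by (auto intro!: derivative_eq_intros)
  from has_derivative_compose[OF this] G_deriv
  have "((\<lambda>s. G (x + s *\<^sub>R e)) has_derivative (\<lambda>s. G' (s *\<^sub>R e))) (at 0)"
    by simp
  moreover have "G' (s *\<^sub>R e) = s * G' e" for s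
    using linear_scale[OF has_derivative_linear[OF G_deriv]] by simp
  ultimately have "((\<lambda>s. G (x + s *\<^sub>R e)) has_field_derivative G' e) (at 0)"
    by (simp add: has_field_derivative_def mult_commute_abs)
  hence "((\<lambda>s. (G (x + s *\<^sub>R e) - G x) / s) \<longlongrightarrow> G' e) (at 0)"
    unfolding has_field_derivative_iff by simp
  moreover have "filterlim h (at 0) sequentially"
    using assms(2,3) unfolding filterlim_at by (auto intro: always_eventually)
  ultimately show ?thesis by (rule filterlim_compose)
qed

lemma integral_mult_partial_derivative_le:
  fixes \<Omega> :: "'a::euclidean_space set" and F G :: "'a \<Rightarrow> real"
  assumes "open \<Omega>" "bounded \<Omega>"
    and F_meas: "(\<lambda>x. indicator \<Omega> x * F x) \<in> borel_measurable borel"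
    and F_bounded: "\<And>x. x \<in> \<Omega> \<Longrightarrow> \<bar>F x\<bar> \<le> B"
    and F_lipschitz: "\<And>x y. x \<in> \<Omega> \<Longrightarrow> y \<in> \<Omega> \<Longrightarrow> \<bar>F x - F y\<bar> \<le> \<Lambda> * norm (x - y)"
    and "0 \<le> \<Lambda>"
    and G_deriv: "\<And>x. (G has_derivative G' x) (at x)"
    and G'_meas: "(\<lambda>x. G' x e) \<in> borel_measurable borel"
    and G_lipschitz: "\<And>x y. \<bar>G x - G y\<bar> \<le> L * norm (x - y)"
    and G_bounded: "\<And>x. \<bar>G x\<bar> \<le> 1"
    and "compact K" "K \<subseteq> \<Omega>" and G_support: "\<And>x. x \<notin> K \<Longrightarrow> G x = 0"
    and "norm e = 1"
  shows "integrable lborel (\<lambda>x. indicator \<Omega> x * F x * G' x e)"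
    and "integral\<^sup>L lborel (\<lambda>x. indicator \<Omega> x * F x * G' x e) \<le> \<Lambda> * measure lborel \<Omega>"
proof -
  define Fo where "Fo x = indicator \<Omega> x * F x" for x
  define h where "h k = inverse (real (Suc k))" for k
  define q where "q k x = Fo x * ((G (x + h k *\<^sub>R e) - G x) / h k)" for k x
  have h_pos: "0 < h k" for k by (simp add: h_def)
  have G_meas: "G \<in> borel_measurable borel"
    using G_deriv by (intro borel_measurable_continuous_onI has_derivative_continuous_on) auto
  have "(\<lambda>k. (G (x + h k *\<^sub>R e) - G x) / h k) \<longlonglongrightarrow> G' x e" for x
    using G_deriv h_pos LIMSEQ_inverse_real_of_nat unfolding h_def
    by (intro difference_quotient_tendsto) (auto simp del: of_nat_Suc)
  hence lim: "AE x in lborel. (\<lambda>k. q k x) \<longlonglongrightarrow> Fo x * G' x e"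
    unfolding q_def by (intro AE_I2 tendsto_mult_left)
  have bound: "AE x in lborel. norm (q k x) \<le> (\<bar>B\<bar> * L) * indicator \<Omega> x" for k
  proof (rule AE_I2)
    fix x
    have "\<bar>G (x + h k *\<^sub>R e) - G x\<bar> / h k \<le> L"
      using G_lipschitz[of "x + h k *\<^sub>R e" x] h_pos[of k] \<open>norm e = 1\<close> by (simp add: divide_le_eq)
    moreover have "\<bar>Fo x\<bar> \<le> \<bar>B\<bar> * indicator \<Omega> x"
      using F_bounded[of x] by (auto simp: Fo_def abs_mult split: split_indicator)
    ultimately have "\<bar>Fo x\<bar> * (\<bar>G (x + h k *\<^sub>R e) - G x\<bar> / h k) \<le> (\<bar>B\<bar> * indicator \<Omega> x) * L"
      using h_pos[of k] by (intro mult_mono) auto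
    thus "norm (q k x) \<le> (\<bar>B\<bar> * L) * indicator \<Omega> x"
      using h_pos[of k] unfolding q_def by (simp add: abs_mult mult_ac)
  qed
  have ind_int: "integrable lborel (\<lambda>x. c * indicator \<Omega> x :: real)" for c
    using \<open>bounded \<Omega>\<close> \<open>open \<Omega>\<close> emeasure_bounded_finite
    by (intro integrable_mult_right integrable_real_indicator) auto
  have meas: "(\<lambda>x. Fo x * G' x e) \<in> borel_measurable lborel" "q k \<in> borel_measurable lborel" for k
    using F_meas G'_meas G_meas unfolding Fo_def[abs_def] q_def[abs_def] measurable_lborel2
    by measurable
  note DCT = integrable_dominated_convergence[OF meas ind_int lim bound]
    integral_dominated_convergence[OF meas ind_int lim bound]
  show "integrable lborel (\<lambda>x. indicator \<Omega> x * F x * G' x e)"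
    using DCT(1) by (simp add: Fo_def)
  obtain \<delta> where "0 < \<delta>" and \<delta>: "(\<Union>y\<in>K. ball y \<delta>) \<subseteq> \<Omega>"
    using compact_subset_open_imp_ball_epsilon_subset[OF \<open>compact K\<close> \<open>open \<Omega>\<close> \<open>K \<subseteq> \<Omega>\<close>] by blast
  obtain N where N: "h N < \<delta>"
    using reals_Archimedean[OF \<open>0 < \<delta>\<close>] unfolding h_def by blast
  have "integral\<^sup>L lborel (q k) \<le> \<Lambda> * measure lborel \<Omega>" if "N \<le> k" for k
    unfolding q_def Fo_def mult.assoc[symmetric]
  proof (rule integral_difference_quotient_le[OF _ _ F_meas F_bounded F_lipschitz \<open>0 \<le> \<Lambda>\<close>
        G_meas G_bounded h_pos \<open>norm e = 1\<close>])
    have "h k \<le> h N"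
      unfolding h_def using that by (intro le_imp_inverse_le) auto
    hence "h k < \<delta>" using N by linarith
    thus "y \<in> \<Omega> \<and> y - h k *\<^sub>R e \<in> \<Omega>" if "G y \<noteq> 0" for y
      using that G_support \<delta> \<open>K \<subseteq> \<Omega>\<close> \<open>norm e = 1\<close> h_pos[of k]
      by (force simp: dist_norm)
  qed (use \<open>open \<Omega>\<close> \<open>bounded \<Omega>\<close> emeasure_bounded_finite in auto)
  hence "integral\<^sup>L lborel (\<lambda>x. Fo x * G' x e) \<le> \<Lambda> * measure lborel \<Omega>"
    by (intro LIMSEQ_le_const2[OF DCT(2)]) auto
  thus "integral\<^sup>L lborel (\<lambda>x. indicator \<Omega> x * F x * G' x e) \<le> \<Lambda> * measure lborel \<Omega>"
    by (simp add: Fo_def)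
qed

lemma indicator_mult_measurable_if_lipschitz:
  assumes "open \<Omega>" "\<And>x y. x \<in> \<Omega> \<Longrightarrow> y \<in> \<Omega> \<Longrightarrow> \<bar>F x - F y\<bar> \<le> \<Lambda> * norm (x - y)" "0 \<le> \<Lambda>"
  shows "(\<lambda>x. indicator \<Omega> x * F x :: real) \<in> borel_measurable borel"
proof -
  have "\<Lambda>-lipschitz_on \<Omega> F"
    using assms(2,3) by (intro lipschitz_onI) (auto simp: dist_real_def dist_norm)
  hence "continuous_on \<Omega> F" by (rule lipschitz_on_continuous_on)
  thus ?thesis
    using borel_measurable_continuous_on_indicator[of \<Omega> F] \<open>open \<Omega>\<close> by simp
qed

lemma total_variation_le_lipschitz:
  fixes \<Omega> :: "'a::euclidean_space set" and F :: "'a \<Rightarrow> real"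
  assumes "open \<Omega>" "bounded \<Omega>"
    and F_bounded: "\<And>x. x \<in> \<Omega> \<Longrightarrow> \<bar>F x\<bar> \<le> B"
    and F_lipschitz: "\<And>x y. x \<in> \<Omega> \<Longrightarrow> y \<in> \<Omega> \<Longrightarrow> \<bar>F x - F y\<bar> \<le> \<Lambda> * norm (x - y)"
    and "0 \<le> \<Lambda>"
  shows "total_variation \<Omega> F \<le> ereal (real DIM('a) * \<Lambda> * measure lborel \<Omega>)"
  unfolding total_variation_def
proof (rule SUP_least)
  fix g assume "g \<in> BV_test_fields \<Omega>"
  then obtain D where D: "\<And>x. (g has_derivative blinfun_apply (D x)) (at x)"
    and cont: "continuous_on UNIV D"
    and "compact (closure {x. g x \<noteq> 0})" "closure {x. g x \<noteq> 0} \<subseteq> \<Omega>"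
    and g_le_1: "\<And>x. norm (g x) \<le> 1"
    unfolding BV_test_fields_def C1_everywhere_def by blast
  have "bounded {x. g x \<noteq> 0}"
    using compact_imp_bounded[OF \<open>compact (closure _)\<close>] by (rule bounded_subset) (rule closure_subset)
  then obtain L where g_lipschitz: "\<And>x y. norm (g x - g y) \<le> L * norm (x - y)"
    using lipschitz_of_C1_bounded_support[OF D cont] by blast
  note F_meas = indicator_mult_measurable_if_lipschitz[OF \<open>open \<Omega>\<close> F_lipschitz \<open>0 \<le> \<Lambda>\<close>]
  have partial: "integrable lborel (\<lambda>x. indicator \<Omega> x * F x * (D x i \<bullet> i)) \<and>
      integral\<^sup>L lborel (\<lambda>x. indicator \<Omega> x * F x * (D x i \<bullet> i)) \<le> \<Lambda> * measure lborel \<Omega>"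
    if i: "i \<in> Basis" for i
  proof -
    have deriv: "((\<lambda>x. g x \<bullet> i) has_derivative (\<lambda>h. D x h \<bullet> i)) (at x)" for x
      by (rule has_derivative_inner_left[OF D])
    have meas: "(\<lambda>x. D x i \<bullet> i) \<in> borel_measurable borel"
      by (intro borel_measurable_continuous_onI continuous_on_inner blinfun.continuous_on cont
          continuous_on_const)
    have lip: "\<bar>g x \<bullet> i - g y \<bullet> i\<bar> \<le> L * norm (x - y)" for x y
      using Basis_le_norm[OF i, of "g x - g y"] g_lipschitz[of x y] by (simp add: inner_diff_left)
    have bnd: "\<bar>g x \<bullet> i\<bar> \<le> 1" for x
      using Basis_le_norm[OF i, of "g x"] g_le_1[of x] by simp
    have supp: "g x \<bullet> i = 0" if "x \<notin> closure {x. g x \<noteq> 0}" for x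
    proof -
      have "g x = 0" using that closure_subset[of "{x. g x \<noteq> 0}"] by blast
      thus ?thesis by simp
    qed
    show ?thesis
      using integral_mult_partial_derivative_le[OF \<open>open \<Omega>\<close> \<open>bounded \<Omega>\<close> F_meas F_bounded F_lipschitz
          \<open>0 \<le> \<Lambda>\<close> deriv meas lip bnd \<open>compact (closure _)\<close> \<open>closure _ \<subseteq> \<Omega>\<close> supp]
        i by simp
  qed
  have "divergence g x = (\<Sum>i\<in>Basis. D x i \<bullet> i)" for x
    unfolding divergence_def frechet_derivative_at[OF D[of x], symmetric] ..
  hence "(LINT x:\<Omega>|lborel. F x * divergence g x)
      = integral\<^sup>L lborel (\<lambda>x. \<Sum>i\<in>Basis. indicator \<Omega> x * F x * (D x i \<bullet> i))"
    by (simp add: set_lebesgue_integral_def sum_distrib_left mult.assoc)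
  also have "\<dots> = (\<Sum>i\<in>Basis. integral\<^sup>L lborel (\<lambda>x. indicator \<Omega> x * F x * (D x i \<bullet> i)))"
    using partial by (intro Bochner_Integration.integral_sum) auto
  also have "\<dots> \<le> (\<Sum>i\<in>(Basis::'a set). \<Lambda> * measure lborel \<Omega>)"
    using partial by (intro sum_mono) auto
  finally show "ereal (LINT x:\<Omega>|lborel. F x * divergence g x) \<le> ereal (real DIM('a) * \<Lambda> * measure lborel \<Omega>)"
    by simp
qed

lemma BV_bounded_if_uniformly_bounded_lipschitz:
  fixes \<Omega> :: "'a::euclidean_space set" and F :: "nat \<Rightarrow> 'a \<Rightarrow> real"
  assumes "open \<Omega>" "bounded \<Omega>"
    and bounded: "\<And>n x. x \<in> \<Omega> \<Longrightarrow> \<bar>F n x\<bar> \<le> B"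
    and lipschitz: "\<And>n x y. x \<in> \<Omega> \<Longrightarrow> y \<in> \<Omega> \<Longrightarrow> \<bar>F n x - F n y\<bar> \<le> \<Lambda> * norm (x - y)"
    and "0 \<le> \<Lambda>"
  shows "BV_bounded \<Omega> F"
proof -
  have \<Omega>: "\<Omega> \<in> sets lborel" "emeasure lborel \<Omega> < \<infinity>"
    using \<open>open \<Omega>\<close> emeasure_bounded_finite[OF \<open>bounded \<Omega>\<close>] by auto
  have const_int: "set_integrable lborel \<Omega> (\<lambda>_. c :: real)" for c
    using integrable_mult_right[OF integrable_real_indicator[OF \<Omega>], of c]
    unfolding set_integrable_def by (simp add: mult.commute)
  have "set_integrable lborel \<Omega> (F n) \<and>
      BV_norm \<Omega> (F n) \<le> ereal (B * measure lborel \<Omega> + real DIM('a) * \<Lambda> * measure lborel \<Omega>)" for n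
  proof
    have "set_borel_measurable lborel \<Omega> (F n)"
      using indicator_mult_measurable_if_lipschitz[OF \<open>open \<Omega>\<close> lipschitz \<open>0 \<le> \<Lambda>\<close>]
      by (simp add: set_borel_measurable_def measurable_lborel2)
    moreover have "norm (F n x) \<le> norm B" if "x \<in> \<Omega>" for x
      unfolding real_norm_def using bounded[OF that, of n] abs_ge_self[of B] by linarith
    ultimately show int: "set_integrable lborel \<Omega> (F n)"
      by (intro set_integrable_bound[OF const_int[of B]] AE_I2 impI) auto
    have "(LINT x:\<Omega>|lborel. \<bar>F n x\<bar>) \<le> (LINT x:\<Omega>|lborel. B)"
      using bounded by (intro set_integral_mono set_integrable_abs int const_int)
    also have "\<dots> = B * measure lborel \<Omega>"
      using \<Omega> by (simp add: set_integral_const less_imp_neq)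
    finally have "ereal (LINT x:\<Omega>|lborel. \<bar>F n x\<bar>) \<le> ereal (B * measure lborel \<Omega>)"
      by simp
    from add_mono[OF this total_variation_le_lipschitz[OF assms(1,2) bounded lipschitz \<open>0 \<le> \<Lambda>\<close>]]
    show "BV_norm \<Omega> (F n) \<le> ereal (B * measure lborel \<Omega> + real DIM('a) * \<Lambda> * measure lborel \<Omega>)"
      by (simp add: BV_norm_def)
  qed
  thus ?thesis unfolding BV_bounded_def by blast
qed

theorem lemma3p14:
  fixes \<Omega> :: "'a::euclidean_space set"
    and \<iota> :: "'v::{real_inner,complete_space} \<Rightarrow> ('a \<Rightarrow> 'a)"
    and v :: "nat \<Rightarrow> real \<Rightarrow> 'v"
    and f0 :: "nat \<Rightarrow> 'a \<Rightarrow> real"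
    and \<phi> :: "nat \<Rightarrow> real \<Rightarrow> 'a \<Rightarrow> 'a"
    and \<epsilon> :: real
  assumes "DIM('a) \<ge> 2"
    and "open \<Omega>" and "bounded \<Omega>" and "lipschitz_boundary \<Omega>"
    and "admissible \<Omega> \<iota>"
    and "\<epsilon> > 0"
    and "\<forall>n. in_L2V (v n)" and "\<exists>K. \<forall>n. L2V_norm (v n) \<le> K"
    and "BV_bounded \<Omega> f0"
    and "\<forall>n. is_flow \<Omega> \<iota> (v n) (\<phi> n)"
  shows "\<forall>t\<in>{0..1}. BV_bounded \<Omega> (\<lambda>n. moll_conv \<Omega> \<epsilon> (f0 n) \<circ> inv_into \<Omega> (\<phi> n t))"
proof
  fix t :: real assume "t \<in> {0..1}"
  obtain K where "\<And>n. L2V_norm (v n) \<le> K"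
    using assms(8) by blast
  then obtain A where "0 \<le> A" and A: "\<And>n p q. p \<in> \<Omega> \<Longrightarrow> q \<in> \<Omega> \<Longrightarrow>
      norm (inv_into \<Omega> (\<phi> n t) p - inv_into \<Omega> (\<phi> n t) q) \<le> A * norm (p - q)"
    using flow_inverse_uniformly_lipschitz[OF assms(5,3)] assms(7,10) \<open>t \<in> {0..1}\<close> by metis
  obtain M where "0 \<le> M" and f: "\<And>n. set_integrable lborel \<Omega> (f0 n)"
    "\<And>n. (LINT x:\<Omega>|lborel. \<bar>f0 n x\<bar>) \<le> M"
    using BV_bounded_imp_L1_bounded[OF assms(9)] by blast
  obtain c where "0 \<le> c"
    and bounded: "\<And>n x. \<bar>moll_conv \<Omega> \<epsilon> (f0 n) x\<bar> \<le> c * M"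
    and lipschitz: "\<And>n x x'. \<bar>moll_conv \<Omega> \<epsilon> (f0 n) x - moll_conv \<Omega> \<epsilon> (f0 n) x'\<bar>
      \<le> c * M * norm (x - x')"
    using moll_conv_bounded_lipschitz[OF assms(6), of \<Omega>] f by metis
  show "BV_bounded \<Omega> (\<lambda>n. moll_conv \<Omega> \<epsilon> (f0 n) \<circ> inv_into \<Omega> (\<phi> n t))"
  proof (rule BV_bounded_if_uniformly_bounded_lipschitz[OF assms(2,3)])
    show "\<bar>(moll_conv \<Omega> \<epsilon> (f0 n) \<circ> inv_into \<Omega> (\<phi> n t)) x\<bar> \<le> c * M" for n x
      by (simp add: bounded)
    show "\<bar>(moll_conv \<Omega> \<epsilon> (f0 n) \<circ> inv_into \<Omega> (\<phi> n t)) x - (moll_conv \<Omega> \<epsilon> (f0 n) \<circ> inv_into \<Omega> (\<phi> n t)) y\<bar>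
        \<le> c * M * A * norm (x - y)" if "x \<in> \<Omega>" "y \<in> \<Omega>" for n x y
      using order_trans[OF lipschitz mult_left_mono[OF A[OF that]]] \<open>0 \<le> c\<close> \<open>0 \<le> M\<close>
      by (simp add: mult.assoc)
  qed (use \<open>0 \<le> c\<close> \<open>0 \<le> M\<close> \<open>0 \<le> A\<close> in simp)
qed

end
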